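(* There is an absolute constant $C$ such that for every coverage function $f\colon\mathbb F_2^n\to[0,1]$ and every $\epsilon\in(0,1]$, $R^{lin}_{\epsilon\text{-approx}}(f)\le C/\epsilon$.
   Context: $f\colon 2^{[n]}\to\mathbb R$ (identified with a function on $\mathbb F_2^n$ via $x\leftrightarrow\{i:x_i=1\}$) is a coverage function if there is a finite universe $U=\{1,\dots,m\}$, subsets $A_1,\dots,A_n\subseteq U$ and non-negative weights $w_1,\dots,w_m$ with $f(S)=\sum_{u\in\bigcup_{j\in S}A_j}w_u$. For $S\subseteq[n]$, $\chi_S(x)=\sum_{i\in S}x_i\pmod2$. Approximate randomized $\mathbb F_2$-sketch complexity: $R^{lin}_{\epsilon\text{-approx}}(f)$ is the smallest integer $k$ such that there exist a probability distribution over $k$-tuples of subsets $\mathbf S_1,\dots,\mathbf S_k\subseteq[n]$ and $g\colon\mathbb F_2^k\to\mathbb R$ with $\mathbb E_{\mathbf S_1,\dots,\mathbf S_k}[(g(\chi_{\mathbf S_1}(x),\dots,\chi_{\mathbf S_k}(x))-f(x))^2]\le\epsilon$ for every $x\in\mathbb F_2^n$. *)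

theory Defs
  imports "HOL-Probability.Probability"
begin

text \<open>Points of F_2^n are identified with subsets of the index set {..<n}
  (0-based indexing of [n]).\<close>

definition chi :: "nat set \<Rightarrow> nat set \<Rightarrow> bool" where
  "chi S x = odd (card (S \<inter> x))"

definition coverage_fun :: "nat \<Rightarrow> (nat set \<Rightarrow> real) \<Rightarrow> bool" where
  "coverage_fun n f \<longleftrightarrow>
     (\<exists>(m::nat) (A :: nat \<Rightarrow> nat set) (w :: nat \<Rightarrow> real).
        (\<forall>j<n. A j \<subseteq> {..<m}) \<and> (\<forall>u<m. w u \<ge> 0) \<and>
        (\<forall>S. S \<subseteq> {..<n} \<longrightarrow> f S = (\<Sum>u\<in>(\<Union>j\<in>S. A j). w u)))"

text \<open>A randomized F_2-sketch of size k: a distribution over k-tuples (lists of length k)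
  of subsets of [n] together with a decoding function g on F_2^k (bool lists of length k).\<close>
definition approx_sketch :: "nat \<Rightarrow> (nat set \<Rightarrow> real) \<Rightarrow> real \<Rightarrow> nat \<Rightarrow> bool" where
  "approx_sketch n f eps k \<longleftrightarrow>
     (\<exists>(p :: nat set list pmf) (g :: bool list \<Rightarrow> real).
        (\<forall>Ss\<in>set_pmf p. length Ss = k \<and> (\<forall>S\<in>set Ss. S \<subseteq> {..<n})) \<and>
        (\<forall>x. x \<subseteq> {..<n} \<longrightarrow>
           measure_pmf.expectation p (\<lambda>Ss. (g (map (\<lambda>S. chi S x) Ss) - f x)\<^sup>2) \<le> eps))"

definition R_lin_approx :: "nat \<Rightarrow> (nat set \<Rightarrow> real) \<Rightarrow> real \<Rightarrow> nat" where
  "R_lin_approx n f eps = (LEAST k. approx_sketch n f eps k)"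

end

theory Submission
  imports Defs
begin

text \<open>Write a coverage function as \<open>f x = (\<Sum>u\<in>U. w u * [x meets B u])\<close>, where \<open>B u\<close> is the
  set of indices whose sets contain the element \<open>u\<close>; then \<open>f {..<n} = W\<close> is the total weight.
  Draw \<open>u\<close> with probability \<open>w u / W\<close> and then a uniformly random \<open>S \<subseteq> B u\<close>: the parity
  \<open>chi S x\<close> is a fair coin if \<open>x\<close> meets \<open>B u\<close> and is \<open>0\<close> otherwise, so \<open>2 W chi S x\<close> is an
  unbiased estimator of \<open>f x\<close> with values in \<open>[0, 2]\<close>. The average of \<open>k = \<lceil>4/\<epsilon>\<rceil>\<close>
  independent copies is a function of the \<open>k\<close> parities and has mean squared error at most
  \<open>4 / k \<le> \<epsilon>\<close>.\<close>

lemma finite_set_replicate_pmf: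
  "finite (set_pmf p) \<Longrightarrow> finite (set_pmf (replicate_pmf k p))"
  using finite_lists_length_eq[of "set_pmf p" k] by (simp add: set_replicate_pmf lists_eq_set)

lemma expectation_bind_pmf_finite:
  fixes h :: "'b \<Rightarrow> 'c::{banach, second_countable_topology}"
  assumes "finite (set_pmf p)" "\<And>a. a \<in> set_pmf p \<Longrightarrow> finite (set_pmf (q a))"
  shows "measure_pmf.expectation (p \<bind> q) h
       = measure_pmf.expectation p (\<lambda>a. measure_pmf.expectation (q a) h)"
  using assms by (simp add: pmf_expectation_bind[OF assms(1) _ subset_refl] integral_measure_pmf[OF assms(1)])

lemma expectation_replicate_pmf_Suc:
  fixes F :: "'a list \<Rightarrow> real"
  assumes "finite (set_pmf p)"
  shows "measure_pmf.expectation (replicate_pmf (Suc k) p) F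
       = measure_pmf.expectation p (\<lambda>a. measure_pmf.expectation (replicate_pmf k p) (\<lambda>xs. F (a # xs)))"
  using assms finite_set_replicate_pmf[OF assms]
  by (simp add: map_pmf_def[symmetric] expectation_bind_pmf_finite)

lemma expectation_sum_list_square_replicate_pmf:
  fixes Y :: "'a \<Rightarrow> real"
  assumes fin: "finite (set_pmf p)" and mean: "measure_pmf.expectation p Y = 0"
    and bound: "\<And>a. a \<in> set_pmf p \<Longrightarrow> (Y a)\<^sup>2 \<le> c"
  shows "measure_pmf.expectation (replicate_pmf k p) (\<lambda>xs. (sum_list (map Y xs))\<^sup>2) \<le> k * c"
proof (induction k)
  case 0
  then show ?case by simp
next
  case (Suc k)
  let ?R = "replicate_pmf k p"
  define ET where "ET = measure_pmf.expectation ?R (\<lambda>xs. sum_list (map Y xs))"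
  define ET2 where "ET2 = measure_pmf.expectation ?R (\<lambda>xs. (sum_list (map Y xs))\<^sup>2)"
  have int: "integrable ?R h" for h :: "'a list \<Rightarrow> real"
    using fin by (intro integrable_measure_pmf_finite finite_set_replicate_pmf)
  have int_p: "integrable p h" for h :: "'a \<Rightarrow> real"
    using fin by (rule integrable_measure_pmf_finite)
  have "measure_pmf.expectation (replicate_pmf (Suc k) p) (\<lambda>xs. (sum_list (map Y xs))\<^sup>2)
      = measure_pmf.expectation p (\<lambda>a. measure_pmf.expectation ?R
          (\<lambda>xs. (Y a)\<^sup>2 + 2 * Y a * sum_list (map Y xs) + (sum_list (map Y xs))\<^sup>2))"
    unfolding expectation_replicate_pmf_Suc[OF fin] by (simp add: power2_sum algebra_simps)
  also have "\<dots> = measure_pmf.expectation p (\<lambda>a. (Y a)\<^sup>2 + 2 * ET * Y a + ET2)"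
    by (simp add: int ET_def ET2_def mult.commute mult.left_commute)
  also have "\<dots> = measure_pmf.expectation p (\<lambda>a. (Y a)\<^sup>2) + ET2"
    by (simp add: int_p mean)
  also have "\<dots> \<le> c + k * c"
  proof -
    have "measure_pmf.expectation p (\<lambda>a. (Y a)\<^sup>2) \<le> c"
      by (rule measure_pmf.integral_le_const[OF int_p]) (simp add: AE_measure_pmf_iff bound)
    with Suc.IH show ?thesis unfolding ET2_def by linarith
  qed
  finally show ?case by (simp add: algebra_simps)
qed

lemma card_Pow_odd_inter_half:
  fixes B x :: "'a set"
  assumes fin: "finite B" and j: "j \<in> B" "j \<in> x"
  shows "2 * card {S \<in> Pow B. odd (card (S \<inter> x))} = card (Pow B)"
proof -
  define toggle where "toggle S = (if j \<in> S then S - {j} else insert j S)" for S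
  define Odd where "Odd = {S \<in> Pow B. odd (card (S \<inter> x))}"
  define Even where "Even = {S \<in> Pow B. even (card (S \<inter> x))}"
  have parity_flip: "odd (card (toggle S \<inter> x)) \<longleftrightarrow> even (card (S \<inter> x))" if "S \<subseteq> B" for S
  proof -
    have "finite (S \<inter> x)" using fin that finite_subset by blast
    moreover have "toggle S \<inter> x = (if j \<in> S then (S \<inter> x) - {j} else insert j (S \<inter> x))"
      using j by (auto simp: toggle_def)
    ultimately show ?thesis
      using j by (auto simp: card_Diff_singleton_if)
  qed
  have toggle_toggle: "toggle (toggle S) = S" for S by (auto simp: toggle_def)
  have toggle_Pow: "S \<subseteq> B \<Longrightarrow> toggle S \<subseteq> B" for S using j by (auto simp: toggle_def)
  have "bij_betw toggle Odd Even"
  proof (rule bij_betwI[where g = toggle])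
    show "toggle \<in> Odd \<rightarrow> Even" "toggle \<in> Even \<rightarrow> Odd"
      using parity_flip toggle_Pow parity_flip[of "toggle _"] by (auto simp: Odd_def Even_def toggle_toggle)
  qed (simp_all add: toggle_toggle)
  then have "card Odd = card Even" by (rule bij_betw_same_card)
  moreover have "card (Pow B) = card Odd + card Even"
  proof -
    have "Pow B = Odd \<union> Even" "Odd \<inter> Even = {}" "finite Odd" "finite Even"
      using fin by (auto simp: Odd_def Even_def)
    then show ?thesis by (metis card_Un_disjoint)
  qed
  ultimately show ?thesis unfolding Odd_def by simp
qed

lemma expectation_chi_pmf_of_set_Pow:
  assumes fin: "finite B"
  shows "measure_pmf.expectation (pmf_of_set (Pow B)) (\<lambda>S. of_bool (chi S x) :: real)
       = (if B \<inter> x = {} then 0 else 1 / 2)"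
proof -
  let ?Odd = "{S \<in> Pow B. odd (card (S \<inter> x))}"
  have expectation: "measure_pmf.expectation (pmf_of_set (Pow B)) (\<lambda>S. of_bool (chi S x) :: real)
      = card ?Odd / card (Pow B)"
    using fin by (subst integral_pmf_of_set) (auto simp: chi_def of_bool_def sum.If_cases Int_commute Pow_def Collect_conj_eq)
  show ?thesis
  proof (cases "B \<inter> x = {}")
    case True
    then have "S \<inter> x = {}" if "S \<subseteq> B" for S using that by blast
    then have "?Odd = {}" by auto
    with True show ?thesis by (simp only: expectation card.empty) simp
  next
    case False
    then obtain j where "j \<in> B" "j \<in> x" by blast
    then have "2 * card ?Odd = card (Pow B)" by (rule card_Pow_odd_inter_half[OF fin])
    then have "real (card (Pow B)) = 2 * card ?Odd" by (metis of_nat_mult of_nat_numeral)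
    moreover have "card (Pow B) > 0" using fin by (simp add: card_Pow)
    ultimately show ?thesis using False expectation by simp
  qed
qed

definition weighted_pmf :: "'a set \<Rightarrow> ('a \<Rightarrow> real) \<Rightarrow> 'a pmf" where
  "weighted_pmf U w = embed_pmf (\<lambda>u. if u \<in> U then w u / sum w U else 0)"

context
  fixes U :: "'a set" and w :: "'a \<Rightarrow> real"
  assumes finite: "finite U" and nonneg: "\<And>u. u \<in> U \<Longrightarrow> 0 \<le> w u" and pos: "sum w U > 0"
begin

lemma pmf_weighted_pmf: "pmf (weighted_pmf U w) u = (if u \<in> U then w u / sum w U else 0)"
  unfolding weighted_pmf_def
proof (rule pmf_embed_pmf)
  show "0 \<le> (if u \<in> U then w u / sum w U else 0)" for u
    using nonneg pos by simp
  have "(\<integral>\<^sup>+u. ennreal (if u \<in> U then w u / sum w U else 0) \<partial>count_space UNIV)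
      = (\<Sum>u\<in>U. ennreal (w u / sum w U))"
    using finite by (subst nn_integral_count_space') auto
  also have "\<dots> = ennreal (\<Sum>u\<in>U. w u / sum w U)"
    using nonneg pos by (intro sum_ennreal) simp
  also have "(\<Sum>u\<in>U. w u / sum w U) = 1"
    using pos by (simp flip: sum_divide_distrib)
  finally show "(\<integral>\<^sup>+u. ennreal (if u \<in> U then w u / sum w U else 0) \<partial>count_space UNIV) = 1"
    by simp
qed

lemma set_weighted_pmf_subset: "set_pmf (weighted_pmf U w) \<subseteq> U"
  by (auto simp: set_pmf_eq pmf_weighted_pmf)

lemma finite_set_weighted_pmf: "finite (set_pmf (weighted_pmf U w))"
  using set_weighted_pmf_subset finite by (rule finite_subset)

lemma expectation_weighted_pmf:
  fixes h :: "'a \<Rightarrow> real"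
  shows "measure_pmf.expectation (weighted_pmf U w) h = (\<Sum>u\<in>U. w u * h u) / sum w U"
  using set_weighted_pmf_subset
  by (subst integral_measure_pmf[OF finite])
     (auto simp: pmf_weighted_pmf sum_divide_distrib intro!: sum.cong)

end

lemma coverage_funE:
  assumes "coverage_fun n f"
  obtains U :: "nat set" and w :: "nat \<Rightarrow> real" and B :: "nat \<Rightarrow> nat set"
  where "finite U" "\<And>u. u \<in> U \<Longrightarrow> 0 \<le> w u" "\<And>u. B u \<subseteq> {..<n}" "\<And>u. u \<in> U \<Longrightarrow> B u \<noteq> {}"
    "\<And>x. x \<subseteq> {..<n} \<Longrightarrow> f x = (\<Sum>u\<in>U. if x \<inter> B u \<noteq> {} then w u else 0)"
proof -
  obtain m :: nat and A :: "nat \<Rightarrow> nat set" and w :: "nat \<Rightarrow> real"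
    where A: "\<forall>j<n. A j \<subseteq> {..<m}" and w: "\<forall>u<m. 0 \<le> w u"
    and f: "\<forall>S. S \<subseteq> {..<n} \<longrightarrow> f S = (\<Sum>u\<in>(\<Union>j\<in>S. A j). w u)"
    using assms unfolding coverage_fun_def by blast
  define U where "U = (\<Union>j<n. A j)"
  define B where "B u = {j. j < n \<and> u \<in> A j}" for u
  have "U \<subseteq> {..<m}" using A by (auto simp: U_def)
  then have finite: "finite U" and "\<And>u. u \<in> U \<Longrightarrow> 0 \<le> w u"
    using w finite_subset[of U "{..<m}"] by auto
  moreover have "B u \<subseteq> {..<n}" "u \<in> U \<Longrightarrow> B u \<noteq> {}" for u by (auto simp: B_def U_def)
  moreover have "f x = (\<Sum>u\<in>U. if x \<inter> B u \<noteq> {} then w u else 0)" if "x \<subseteq> {..<n}" for x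
  proof -
    have "(\<Union>j\<in>x. A j) = {u \<in> U. x \<inter> B u \<noteq> {}}" using that by (auto simp: U_def B_def)
    then show ?thesis using f that finite by (simp add: sum.inter_filter)
  qed
  ultimately show thesis using that by blast
qed

lemma coverage_fun_parity_estimator:
  assumes "coverage_fun n f"
  obtains r :: "nat set pmf"
  where "finite (set_pmf r)" "\<And>S. S \<in> set_pmf r \<Longrightarrow> S \<subseteq> {..<n}"
    "\<And>x. x \<subseteq> {..<n} \<Longrightarrow>
       measure_pmf.expectation r (\<lambda>S. 2 * f {..<n} * of_bool (chi S x)) = f x"
proof (rule coverage_funE[OF assms])
  fix U w B
  assume finite: "finite U" and nonneg: "\<And>u. u \<in> U \<Longrightarrow> 0 \<le> w u"
    and B: "\<And>u. B u \<subseteq> {..<n}" "\<And>u. u \<in> U \<Longrightarrow> B u \<noteq> {}"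
    and f: "\<And>x. x \<subseteq> {..<n} \<Longrightarrow> f x = (\<Sum>u\<in>U. if x \<inter> B u \<noteq> {} then w u else 0)"
  have finite_B: "finite (B u)" for u using B(1) finite_subset by blast
  have set_uniform: "set_pmf (pmf_of_set (Pow (B u))) = Pow (B u)" for u
    using finite_B by (intro set_pmf_of_set) auto
  have total_weight: "f {..<n} = sum w U"
    using B by (simp add: f Int_absorb1)
  show thesis
  proof (cases "sum w U = 0")
    case True
    then have "f x = 0" if "x \<subseteq> {..<n}" for x
      using finite nonneg by (simp add: f[OF that] sum_nonneg_eq_0_iff)
    then show thesis by (intro that[of "return_pmf {}"]) (auto simp: total_weight True)
  next
    case False
    then have pos: "sum w U > 0" using finite nonneg by (simp add: less_le sum_nonneg)
    define r where "r = weighted_pmf U w \<bind> (\<lambda>u. pmf_of_set (Pow (B u)))"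
    have set_r: "set_pmf r \<subseteq> (\<Union>u\<in>U. Pow (B u))"
      using set_weighted_pmf_subset[OF finite nonneg pos] finite_B
      by (auto simp: r_def set_uniform)
    have "finite (set_pmf r)"
      using set_r finite finite_B by (meson finite_Pow_iff finite_UN_I finite_subset)
    moreover have "S \<subseteq> {..<n}" if "S \<in> set_pmf r" for S using set_r that B(1) by blast
    moreover have "measure_pmf.expectation r (\<lambda>S. 2 * f {..<n} * of_bool (chi S x)) = f x"
      if "x \<subseteq> {..<n}" for x
    proof -
      have "measure_pmf.expectation r (\<lambda>S. 2 * f {..<n} * of_bool (chi S x))
          = measure_pmf.expectation (weighted_pmf U w) (\<lambda>u.
              measure_pmf.expectation (pmf_of_set (Pow (B u))) (\<lambda>S. 2 * f {..<n} * of_bool (chi S x)))"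
        unfolding r_def using finite_set_weighted_pmf[OF finite nonneg pos]
        by (rule expectation_bind_pmf_finite) (auto simp: set_uniform finite_B)
      also have "\<dots> = measure_pmf.expectation (weighted_pmf U w)
                         (\<lambda>u. if x \<inter> B u \<noteq> {} then sum w U else 0)"
        by (rule Bochner_Integration.integral_cong)
           (auto simp: total_weight expectation_chi_pmf_of_set_Pow finite_B Int_commute)
      also have "\<dots> = (\<Sum>u\<in>U. w u * (if x \<inter> B u \<noteq> {} then sum w U else 0)) / sum w U"
        by (rule expectation_weighted_pmf[OF finite nonneg pos])
      also have "\<dots> = f x"
        using pos by (auto simp: f[OF that] sum_divide_distrib intro!: sum.cong)
      finally show ?thesis .
    qed
    ultimately show thesis by (rule that)
  qed
qed

lemma approx_sketch_of_parity_estimator: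
  fixes h :: "bool \<Rightarrow> real" and r :: "nat set pmf"
  assumes finite: "finite (set_pmf r)" and subsets: "\<And>S. S \<in> set_pmf r \<Longrightarrow> S \<subseteq> {..<n}"
    and unbiased: "\<And>x. x \<subseteq> {..<n} \<Longrightarrow> measure_pmf.expectation r (\<lambda>S. h (chi S x)) = f x"
    and bounded: "\<And>x S. x \<subseteq> {..<n} \<Longrightarrow> S \<in> set_pmf r \<Longrightarrow> (h (chi S x) - f x)\<^sup>2 \<le> V"
    and k: "k > 0" "V / k \<le> eps"
  shows "approx_sketch n f eps k"
proof -
  let ?p = "replicate_pmf k r"
  define g where "g bs = sum_list (map h bs) / k" for bs
  have "\<forall>Ss\<in>set_pmf ?p. length Ss = k \<and> (\<forall>S\<in>set Ss. S \<subseteq> {..<n})"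
    using subsets by (auto simp: set_replicate_pmf)
  moreover have "measure_pmf.expectation ?p (\<lambda>Ss. (g (map (\<lambda>S. chi S x) Ss) - f x)\<^sup>2) \<le> eps"
    if x: "x \<subseteq> {..<n}" for x
  proof -
    define Y where "Y S = h (chi S x) - f x" for S
    have "measure_pmf.expectation r Y = 0"
      unfolding Y_def[abs_def]
      by (subst Bochner_Integration.integral_diff)
         (simp_all add: integrable_measure_pmf_finite[OF finite] unbiased[OF x])
    then have variance: "measure_pmf.expectation ?p (\<lambda>Ss. (sum_list (map Y Ss))\<^sup>2) \<le> k * V"
      using finite bounded[OF x] by (intro expectation_sum_list_square_replicate_pmf) (auto simp: Y_def)
    have error: "(g (map (\<lambda>S. chi S x) Ss) - f x)\<^sup>2 = (sum_list (map Y Ss))\<^sup>2 / k\<^sup>2"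
      if "Ss \<in> set_pmf ?p" for Ss
    proof -
      have "sum_list (map Y Ss) = sum_list (map h (map (\<lambda>S. chi S x) Ss)) - k * f x"
        using that by (simp add: Y_def[abs_def] sum_list_subtractf sum_list_triv set_replicate_pmf o_def)
      then have "g (map (\<lambda>S. chi S x) Ss) - f x = sum_list (map Y Ss) / k"
        using k(1) by (simp add: g_def field_simps)
      then show ?thesis by (simp add: power_divide)
    qed
    have "measure_pmf.expectation ?p (\<lambda>Ss. (g (map (\<lambda>S. chi S x) Ss) - f x)\<^sup>2)
        = measure_pmf.expectation ?p (\<lambda>Ss. (sum_list (map Y Ss))\<^sup>2) / k\<^sup>2"
      by (subst integral_divide_zero[symmetric], intro integral_cong_AE)
         (simp_all add: error AE_measure_pmf_iff)
    also have "\<dots> \<le> k * V / k\<^sup>2"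
      using variance by (simp add: divide_right_mono)
    also have "\<dots> = V / k"
      by (simp add: power2_eq_square)
    finally show ?thesis using k(2) by linarith
  qed
  ultimately show ?thesis unfolding approx_sketch_def by blast
qed

lemma coverage_fun_approx_sketch:
  assumes cov: "coverage_fun n f" and range: "\<And>x. x \<subseteq> {..<n} \<Longrightarrow> 0 \<le> f x \<and> f x \<le> 1"
    and eps: "0 < eps"
  shows "approx_sketch n f eps (nat \<lceil>4 / eps\<rceil>)"
proof -
  obtain r where r: "finite (set_pmf r)" "\<And>S. S \<in> set_pmf r \<Longrightarrow> S \<subseteq> {..<n}"
    "\<And>x. x \<subseteq> {..<n} \<Longrightarrow> measure_pmf.expectation r (\<lambda>S. 2 * f {..<n} * of_bool (chi S x)) = f x"
    using coverage_fun_parity_estimator[OF cov] by blast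
  define k where "k = nat \<lceil>4 / eps\<rceil>"
  have k: "4 / eps \<le> real k"
    unfolding k_def by (rule real_nat_ceiling_ge)
  have "approx_sketch n f eps k"
  proof (rule approx_sketch_of_parity_estimator[where h = "\<lambda>b. 2 * f {..<n} * of_bool b" and V = 4, OF r])
    fix x S assume "x \<subseteq> {..<n}"
    then have "0 \<le> f {..<n}" "f {..<n} \<le> 1" "0 \<le> f x" "f x \<le> 1" using range by auto
    then have "\<bar>2 * f {..<n} * of_bool (chi S x) - f x\<bar> \<le> 2" by (cases "chi S x") auto
    then have "\<bar>2 * f {..<n} * of_bool (chi S x) - f x\<bar>\<^sup>2 \<le> 2\<^sup>2" by (rule power_mono) simp
    then show "(2 * f {..<n} * of_bool (chi S x) - f x)\<^sup>2 \<le> 4" by simp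
  next
    have "0 < 4 / eps" using eps by simp
    with k show "0 < k" by linarith
    with k eps show "4 / real k \<le> eps" by (simp add: field_simps)
  qed
  then show ?thesis by (simp add: k_def)
qed

theorem mainTheorem15:
  shows "\<exists>C::real. \<forall>(n::nat) (f :: nat set \<Rightarrow> real) (eps::real).
     coverage_fun n f \<and> (\<forall>x. x \<subseteq> {..<n} \<longrightarrow> 0 \<le> f x \<and> f x \<le> 1) \<and>
     0 < eps \<and> eps \<le> 1 \<longrightarrow> real (R_lin_approx n f eps) \<le> C / eps"
proof (intro exI[of _ 5] allI impI, elim conjE)
  fix n f and eps :: real
  assume cov: "coverage_fun n f" and range: "\<forall>x. x \<subseteq> {..<n} \<longrightarrow> 0 \<le> f x \<and> f x \<le> 1"
    and eps: "0 < eps" "eps \<le> 1"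
  have "approx_sketch n f eps (nat \<lceil>4 / eps\<rceil>)"
    using coverage_fun_approx_sketch[OF cov _ eps(1)] range by blast
  then have "R_lin_approx n f eps \<le> nat \<lceil>4 / eps\<rceil>"
    unfolding R_lin_approx_def by (rule Least_le)
  then have "real (R_lin_approx n f eps) \<le> real (nat \<lceil>4 / eps\<rceil>)"
    by (rule of_nat_mono)
  also have "\<dots> \<le> 4 / eps + 1"
    using of_int_ceiling_le_add_one[of "4 / eps"] eps by simp
  also have "\<dots> \<le> 5 / eps"
    using eps by (simp add: field_simps)
  finally show "real (R_lin_approx n f eps) \<le> 5 / eps" .
qed

end
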